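(* For a finite group $G$ and a nonnormal subgroup $H$ of $G$ with $H\cong\mathbb Z_2$, let $r$ be the number of fixed points of the left translation action of $H$ on $G/H$ (equivalently $r=[Z_G(H):H]$, where $Z_G(H)$ is the centralizer of $H$) and let $q$ be the number of two-element orbits of this action (so $[G:H]=r+2q$). Then a pair $(r,q)$ of positive integers arises in this way from some such $G$ and $H$ if and only if $r$ divides $2q$. *)

theory Defs
  imports "HOL-Algebra.Coset"
begin

definition left_cosets :: "('a, 'b) monoid_scheme \<Rightarrow> 'a set \<Rightarrow> 'a set set" where
  "left_cosets G H = {x <#\<^bsub>G\<^esub> H | x. x \<in> carrier G}"

definition fixed_cosets :: "('a, 'b) monoid_scheme \<Rightarrow> 'a set \<Rightarrow> 'a set set" where
  "fixed_cosets G H = {C \<in> left_cosets G H. \<forall>h\<in>H. h <#\<^bsub>G\<^esub> C = C}"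

definition coset_orbit :: "('a, 'b) monoid_scheme \<Rightarrow> 'a set \<Rightarrow> 'a set \<Rightarrow> 'a set set" where
  "coset_orbit G H C = {h <#\<^bsub>G\<^esub> C | h. h \<in> H}"

definition two_elem_orbits :: "('a, 'b) monoid_scheme \<Rightarrow> 'a set \<Rightarrow> 'a set set set" where
  "two_elem_orbits G H = {Ob. \<exists>C\<in>left_cosets G H. Ob = coset_orbit G H C \<and> card Ob = 2}"

definition arises_from :: "('a, 'b) monoid_scheme \<Rightarrow> 'a set \<Rightarrow> nat \<Rightarrow> nat \<Rightarrow> bool" where
  "arises_from G H r q \<longleftrightarrow>
     group G \<and> finite (carrier G) \<and> subgroup H G \<and> \<not> (H \<lhd> G) \<and> card H = 2 \<and>
     r = card (fixed_cosets G H) \<and> q = card (two_elem_orbits G H)"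

end

theory Submission
  imports Defs "HOL-Algebra.Left_Coset" "HOL-Library.Countable"
begin

text \<open>Write \<open>H = {1, h}\<close>. The coset \<open>xH\<close> is fixed by \<open>h\<close> iff \<open>x\<close> commutes with \<open>h\<close>, so the
  fixed cosets are the cosets of \<open>H\<close> inside the centralizer \<open>C\<close> of \<open>h\<close> and \<open>2r = |C|\<close>; since
  \<open>h\<close> acts on \<open>G/H\<close> as an involution, \<open>[G:H] = r + 2q\<close>. By Lagrange \<open>|C|\<close> divides \<open>|G|\<close>,
  so \<open>r\<close> divides \<open>[G:H] = |G|/2\<close> and hence \<open>2q\<close>.

  Conversely, in \<open>Z\<^sub>a \<times> D\<^sub>n\<close> (\<open>n \<ge> 3\<close>) with \<open>H\<close> generated by a reflection, \<open>H\<close> is not normal,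
  \<open>[G:H] = an\<close>, and \<open>r = a\<close> for odd \<open>n\<close>, \<open>r = 2a\<close> for even \<open>n\<close>. Taking \<open>a = r/2\<close> or \<open>a = r\<close>
  according as \<open>r\<close> is even or odd, and \<open>n = (r + 2q)/a\<close>, realizes \<open>(r, q)\<close>.\<close>

lemma card_involution_fixed_points_and_orbits:
  assumes fin: "finite X" and maps: "\<And>x. x \<in> X \<Longrightarrow> \<sigma> x \<in> X"
    and invol: "\<And>x. x \<in> X \<Longrightarrow> \<sigma> (\<sigma> x) = x"
  shows "card X = card {x \<in> X. \<sigma> x = x} + 2 * card {{x, \<sigma> x} | x. x \<in> X \<and> \<sigma> x \<noteq> x}"
proof -
  define M where "M = {x \<in> X. \<sigma> x \<noteq> x}"
  define P where "P = {{x, \<sigma> x} | x. x \<in> M}"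
  have orbit_eq: "{z, \<sigma> z} = {x, \<sigma> x}" if "x \<in> X" "z \<in> {x, \<sigma> x}" for x z
    using that invol by auto
  have "\<sigma> x \<in> M" if "x \<in> M" for x
    using that maps invol unfolding M_def by force
  then have UP: "\<Union>P = M"
    unfolding P_def by blast
  have "2 * card P = card (\<Union>P)"
  proof (rule card_partition)
    show "finite P" using fin by (simp add: P_def M_def)
    show "finite (\<Union>P)" using UP fin by (simp add: M_def)
    show "card c = 2" if "c \<in> P" for c using that by (auto simp: P_def M_def)
    show "c1 \<inter> c2 = {}" if "c1 \<in> P" "c2 \<in> P" "c1 \<noteq> c2" for c1 c2
      using that orbit_eq unfolding P_def M_def by blast
  qed
  moreover have "card X = card {x \<in> X. \<sigma> x = x} + card M"
  proof -
    have "X = {x \<in> X. \<sigma> x = x} \<union> M" by (auto simp: M_def)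
    then show ?thesis using fin by (metis (no_types, lifting) M_def card_Un_disjoint disjoint_iff
      finite_Un mem_Collect_eq)
  qed
  ultimately show ?thesis using UP by (simp add: P_def M_def)
qed

definition centralizer :: "('a, 'b) monoid_scheme \<Rightarrow> 'a \<Rightarrow> 'a set" where
  "centralizer G h = {x \<in> carrier G. h \<otimes>\<^bsub>G\<^esub> x = x \<otimes>\<^bsub>G\<^esub> h}"

context group
begin

lemma left_cosets_eq_lcosets: "left_cosets G H = lcosets H"
  by (auto simp: left_cosets_def LCOSETS_def)

lemma subgroup_centralizer:
  assumes h: "h \<in> carrier G"
  shows "subgroup (centralizer G h) G"
proof (rule subgroupI)
  fix x y assume x: "x \<in> centralizer G h" and y: "y \<in> centralizer G h"
  then show "x \<otimes> y \<in> centralizer G h"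
    using h by (auto simp: centralizer_def m_assoc[symmetric]) (simp add: m_assoc)
  have x': "x \<in> carrier G" "h \<otimes> x = x \<otimes> h" using x by (auto simp: centralizer_def)
  have "inv x \<otimes> h = inv x \<otimes> h \<otimes> (x \<otimes> inv x)"
    using x'(1) h by simp
  also have "\<dots> = inv x \<otimes> (h \<otimes> x) \<otimes> inv x"
    using x'(1) h by (simp add: m_assoc)
  also have "\<dots> = inv x \<otimes> (x \<otimes> h) \<otimes> inv x"
    using x'(2) by simp
  also have "\<dots> = h \<otimes> inv x"
    using x'(1) h by (simp add: m_assoc[symmetric])
  finally show "inv x \<in> centralizer G h"
    using x' by (simp add: centralizer_def)
qed (auto simp: centralizer_def h)

lemma order_two_subgroupE:
  assumes sub: "subgroup H G" and card: "card H = 2"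
  obtains h where "h \<in> carrier G" "h \<noteq> \<one>" "h \<otimes> h = \<one>" "H = {\<one>, h}"
proof -
  obtain h where H: "H = {\<one>, h}" and h1: "h \<noteq> \<one>"
    using card subgroup.one_closed[OF sub] by (metis card_2_iff insert_commute insertE singletonD)
  then have h: "h \<in> carrier G" using subgroup.mem_carrier[OF sub] by simp
  have "h \<otimes> h \<in> H" using subgroup.m_closed[OF sub, of h h] H by simp
  moreover have "h \<otimes> h \<noteq> h" using h h1 by (metis r_cancel_one)
  ultimately show thesis using that h h1 H by auto
qed

context
  fixes h assumes h: "h \<in> carrier G" and h_neq_one: "h \<noteq> \<one>" and h_square: "h \<otimes> h = \<one>"
begin

lemma subgroup_order_two: "subgroup {\<one>, h} G"
proof (rule subgroupI)
  show "inv x \<in> {\<one>, h}" if "x \<in> {\<one>, h}" for x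
    using that h h_square inv_equality by auto
qed (use h h_square in auto)

lemma l_coset_order_two: "x \<in> carrier G \<Longrightarrow> x <# {\<one>, h} = {x, x \<otimes> h}"
  by (auto simp: l_coset_def)

lemma translate_l_coset_order_two_eq_iff:
  assumes x: "x \<in> carrier G"
  shows "h <# (x <# {\<one>, h}) = x <# {\<one>, h} \<longleftrightarrow> h \<otimes> x = x \<otimes> h"
proof -
  have "h <# (x <# {\<one>, h}) = (h \<otimes> x) <# {\<one>, h}"
    using x h by (simp add: lcos_m_assoc)
  also have "\<dots> = {h \<otimes> x, h \<otimes> x \<otimes> h}"
    using x h by (simp add: l_coset_order_two)
  finally have "h <# (x <# {\<one>, h}) = {h \<otimes> x, h \<otimes> x \<otimes> h}" .
  moreover have "h \<otimes> x \<noteq> x" "x \<otimes> h \<noteq> x"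
    using x h h_neq_one by (metis r_cancel_one, metis l_cancel_one)
  moreover have "h \<otimes> x \<otimes> h = x" if "h \<otimes> x = x \<otimes> h"
    using that x h h_square by (simp add: m_assoc)
  ultimately show ?thesis
    using x by (auto simp: l_coset_order_two doubleton_eq_iff)
qed

lemma not_normal_order_two:
  assumes x: "x \<in> carrier G" and noncomm: "x \<otimes> h \<noteq> h \<otimes> x"
  shows "\<not> {\<one>, h} \<lhd> G"
proof
  assume "{\<one>, h} \<lhd> G"
  then have "{\<one>, h} #> x = x <# {\<one>, h}"
    using x normal.coset_eq by blast
  then have "{x, h \<otimes> x} = {x, x \<otimes> h}"
    using x h by (auto simp: r_coset_def l_coset_def)
  moreover have "x \<otimes> h \<noteq> x"
    using x h h_neq_one by (metis l_cancel_one)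
  ultimately show False
    using noncomm by (auto simp: doubleton_eq_iff)
qed

lemma translate_left_coset_order_two:
  assumes "C \<in> left_cosets G {\<one>, h}"
  shows "h <# C \<in> left_cosets G {\<one>, h}" and "h <# (h <# C) = C" and "\<one> <# C = C"
proof -
  obtain x where x: "x \<in> carrier G" and C: "C = x <# {\<one>, h}"
    using assms by (auto simp: left_cosets_def)
  have hC: "h <# C = (h \<otimes> x) <# {\<one>, h}"
    using x h by (simp add: C lcos_m_assoc)
  then show "h <# C \<in> left_cosets G {\<one>, h}"
    using x h by (auto simp: left_cosets_def)
  show "h <# (h <# C) = C"
    using x h h_square by (simp add: hC C lcos_m_assoc m_assoc[symmetric])
  show "\<one> <# C = C"
    using x h by (simp add: C lcos_mult_one l_coset_order_two)
qed

lemma fixed_cosets_order_two: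
  "fixed_cosets G {\<one>, h} = {C \<in> left_cosets G {\<one>, h}. h <# C = C}"
  using translate_left_coset_order_two(3) by (auto simp: fixed_cosets_def)

lemma two_elem_orbits_order_two:
  "two_elem_orbits G {\<one>, h} = {{C, h <# C} | C. C \<in> left_cosets G {\<one>, h} \<and> h <# C \<noteq> C}"
proof -
  have "coset_orbit G {\<one>, h} C = {C, h <# C}" if "C \<in> left_cosets G {\<one>, h}" for C
    using translate_left_coset_order_two(3)[OF that] by (auto simp: coset_orbit_def)
  then show ?thesis
    by (auto simp: two_elem_orbits_def card_2_iff doubleton_eq_iff)
qed

lemma fixed_cosets_order_two_eq_image:
  "fixed_cosets G {\<one>, h} = (\<lambda>x. x <# {\<one>, h}) ` centralizer G h"
proof -
  have "fixed_cosets G {\<one>, h}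
      = (\<lambda>x. x <# {\<one>, h}) ` {x \<in> carrier G. h <# (x <# {\<one>, h}) = x <# {\<one>, h}}"
    by (auto simp: fixed_cosets_order_two left_cosets_def)
  also have "\<dots> = (\<lambda>x. x <# {\<one>, h}) ` centralizer G h"
    using translate_l_coset_order_two_eq_iff by (auto simp: centralizer_def)
  finally show ?thesis .
qed

lemma card_left_cosets_order_two:
  assumes "finite (carrier G)"
  shows "card (left_cosets G {\<one>, h}) * 2 = order G"
  using l_lagrange[OF assms subgroup_order_two] h_neq_one by (simp add: left_cosets_eq_lcosets)

lemma card_fixed_cosets_order_two:
  assumes "finite (carrier G)"
  shows "card (fixed_cosets G {\<one>, h}) * 2 = card (centralizer G h)"
proof -
  let ?C = "G\<lparr>carrier := centralizer G h\<rparr>"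
  have C: "subgroup (centralizer G h) G" by (rule subgroup_centralizer[OF h])
  interpret C: group ?C using subgroup.subgroup_is_group[OF C is_group] .
  have "h \<in> centralizer G h" using h by (simp add: centralizer_def)
  then have "subgroup {\<one>, h} ?C"
    using subgroup_incl[OF subgroup_order_two C] C by (simp add: subgroup.one_closed)
  moreover have "finite (carrier ?C)"
    using finite_subset[OF subgroup.subset[OF C] assms] by simp
  ultimately have "card (lcosets\<^bsub>?C\<^esub> {\<one>, h}) * card {\<one>, h} = card (centralizer G h)"
    using C.l_lagrange by (simp add: order_def)
  moreover have "lcosets\<^bsub>?C\<^esub> {\<one>, h} = fixed_cosets G {\<one>, h}"
    by (auto simp: LCOSETS_def l_coset_def fixed_cosets_order_two_eq_image)
  ultimately show ?thesis using h_neq_one by simp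
qed

lemma index_eq_fixed_cosets_plus_two_elem_orbits:
  assumes "finite (carrier G)"
  shows "card (left_cosets G {\<one>, h})
           = card (fixed_cosets G {\<one>, h}) + 2 * card (two_elem_orbits G {\<one>, h})"
  unfolding fixed_cosets_order_two two_elem_orbits_order_two
proof (rule card_involution_fixed_points_and_orbits)
  show "finite (left_cosets G {\<one>, h})"
    using assms by (simp add: left_cosets_def)
qed (simp_all add: translate_left_coset_order_two)

end

lemma fixed_cosets_dvd_two_elem_orbits:
  assumes fin: "finite (carrier G)" and sub: "subgroup H G" and card: "card H = 2"
  shows "card (fixed_cosets G H) dvd 2 * card (two_elem_orbits G H)"
proof -
  obtain h where h: "h \<in> carrier G" "h \<noteq> \<one>" "h \<otimes> h = \<one>" and H: "H = {\<one>, h}"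
    using order_two_subgroupE[OF sub card] .
  let ?r = "card (fixed_cosets G H)" and ?L = "card (left_cosets G H)"
  have "card (centralizer G h) dvd order G"
    using lagrange[OF subgroup_centralizer[OF h(1)]] by (metis dvd_triv_right)
  then have "?r * 2 dvd ?L * 2"
    using card_fixed_cosets_order_two[OF h fin] card_left_cosets_order_two[OF h fin] by (simp add: H)
  then have "?r dvd ?L" by simp
  moreover have "?L = ?r + 2 * card (two_elem_orbits G H)"
    using index_eq_fixed_cosets_plus_two_elem_orbits[OF h fin] by (simp add: H)
  ultimately show ?thesis by (metis dvd_add_right_iff dvd_refl)
qed

end

text \<open>The triple \<open>(c, k, e)\<close> stands for \<open>(c, \<rho>\<^sup>k \<sigma>\<^sup>e)\<close> in \<open>Z\<^sub>a \<times> D\<^sub>n\<close>, where \<open>\<rho>\<close> is a rotation of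
  order \<open>n\<close> and \<open>\<sigma>\<close> a reflection, using \<open>\<sigma>\<rho>\<^sup>k = \<rho>\<^sup>-\<^sup>k\<sigma>\<close>. The group is carried over to \<open>nat\<close>
  along \<open>to_nat\<close>, since the theorem asks for a group on \<open>nat\<close>.\<close>

fun cyclic_dihedral_mult ::
  "nat \<Rightarrow> nat \<Rightarrow> int \<times> int \<times> bool \<Rightarrow> int \<times> int \<times> bool \<Rightarrow> int \<times> int \<times> bool" where
  "cyclic_dihedral_mult a n (c, k, e) (c', k', e') =
     ((c + c') mod int a, (k + (if e then - k' else k')) mod int n, e \<noteq> e')"

definition cyclic_dihedral_elems :: "nat \<Rightarrow> nat \<Rightarrow> (int \<times> int \<times> bool) set" where
  "cyclic_dihedral_elems a n = {0..<int a} \<times> {0..<int n} \<times> UNIV"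

definition cyclic_dihedral :: "nat \<Rightarrow> nat \<Rightarrow> nat monoid" where
  "cyclic_dihedral a n =
     \<lparr>carrier = to_nat ` cyclic_dihedral_elems a n,
      mult = (\<lambda>x y. to_nat (cyclic_dihedral_mult a n (from_nat x) (from_nat y))),
      one = to_nat ((0::int), (0::int), False)\<rparr>"

lemma cyclic_dihedral_mult_closed:
  "0 < a \<Longrightarrow> 0 < n \<Longrightarrow> cyclic_dihedral_mult a n t u \<in> cyclic_dihedral_elems a n"
  by (cases t; cases u) (simp add: cyclic_dihedral_elems_def)

lemma cyclic_dihedral_mult_assoc:
  "cyclic_dihedral_mult a n (cyclic_dihedral_mult a n t u) v
     = cyclic_dihedral_mult a n t (cyclic_dihedral_mult a n u v)"
  by (cases t; cases u; cases v) (auto simp: mod_simps algebra_simps)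

lemma cyclic_dihedral_one_mult:
  "t \<in> cyclic_dihedral_elems a n \<Longrightarrow> cyclic_dihedral_mult a n (0, 0, False) t = t"
  by (cases t) (simp add: cyclic_dihedral_elems_def)

lemma cyclic_dihedral_inverse_exists:
  assumes "0 < a" "0 < n" "t \<in> cyclic_dihedral_elems a n"
  shows "\<exists>u \<in> cyclic_dihedral_elems a n. cyclic_dihedral_mult a n u t = (0, 0, False)"
proof -
  obtain c k e where t: "t = (c, k, e)" by (cases t)
  let ?u = "((- c) mod int a, if e then k else (- k) mod int n, e)"
  have "?u \<in> cyclic_dihedral_elems a n" and "cyclic_dihedral_mult a n ?u t = (0, 0, False)"
    using assms by (auto simp: cyclic_dihedral_elems_def t mod_simps)
  then show ?thesis by blast
qed

lemma cyclic_dihedral_simps: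
  "carrier (cyclic_dihedral a n) = to_nat ` cyclic_dihedral_elems a n"
  "to_nat t \<otimes>\<^bsub>cyclic_dihedral a n\<^esub> to_nat u = to_nat (cyclic_dihedral_mult a n t u)"
  "\<one>\<^bsub>cyclic_dihedral a n\<^esub> = to_nat ((0::int), (0::int), False)"
  by (simp_all add: cyclic_dihedral_def)

lemma group_cyclic_dihedral:
  assumes "0 < a" "0 < n"
  shows "group (cyclic_dihedral a n)"
proof (rule groupI)
  show "\<one>\<^bsub>cyclic_dihedral a n\<^esub> \<in> carrier (cyclic_dihedral a n)"
    using assms by (auto simp: cyclic_dihedral_simps cyclic_dihedral_elems_def)
  fix x assume "x \<in> carrier (cyclic_dihedral a n)"
  then obtain t where t: "t \<in> cyclic_dihedral_elems a n" "x = to_nat t"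
    by (auto simp: cyclic_dihedral_simps)
  then show "\<one>\<^bsub>cyclic_dihedral a n\<^esub> \<otimes>\<^bsub>cyclic_dihedral a n\<^esub> x = x"
    by (simp add: cyclic_dihedral_simps cyclic_dihedral_one_mult)
  from t obtain u where "u \<in> cyclic_dihedral_elems a n" "cyclic_dihedral_mult a n u t = (0, 0, False)"
    using cyclic_dihedral_inverse_exists[OF assms] by blast
  with t show "\<exists>y \<in> carrier (cyclic_dihedral a n). y \<otimes>\<^bsub>cyclic_dihedral a n\<^esub> x = \<one>\<^bsub>cyclic_dihedral a n\<^esub>"
    by (auto simp: cyclic_dihedral_simps)
  fix y z assume "y \<in> carrier (cyclic_dihedral a n)" "z \<in> carrier (cyclic_dihedral a n)"
  then obtain u v :: "int \<times> int \<times> bool" where "y = to_nat u" "z = to_nat v"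
    by (auto simp: cyclic_dihedral_simps)
  with t show "x \<otimes>\<^bsub>cyclic_dihedral a n\<^esub> y \<in> carrier (cyclic_dihedral a n)"
    and "x \<otimes>\<^bsub>cyclic_dihedral a n\<^esub> y \<otimes>\<^bsub>cyclic_dihedral a n\<^esub> z
       = x \<otimes>\<^bsub>cyclic_dihedral a n\<^esub> (y \<otimes>\<^bsub>cyclic_dihedral a n\<^esub> z)"
    using cyclic_dihedral_mult_closed[OF assms, of t u] by (simp_all add: cyclic_dihedral_simps cyclic_dihedral_mult_assoc)
qed

definition self_inverse_residues :: "nat \<Rightarrow> int set" where
  "self_inverse_residues n = {k \<in> {0..<int n}. (- k) mod int n = k}"

lemma neg_mod_eq:
  fixes k n :: int
  assumes "0 < k" "k < n"
  shows "(- k) mod n = n - k"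
proof -
  have "(- k) mod n = (n - k) mod n" by (simp add: mod_simps)
  also have "\<dots> = n - k" using assms by (intro mod_pos_pos_trivial) auto
  finally show ?thesis .
qed

lemma self_inverse_residues_odd: "odd n \<Longrightarrow> self_inverse_residues n = {0}"
proof safe
  fix k assume n: "odd n" and k: "k \<in> self_inverse_residues n"
  show "k = 0"
  proof (rule ccontr)
    assume "k \<noteq> 0"
    then have "2 * k = int n"
      using k neg_mod_eq[of k "int n"] by (auto simp: self_inverse_residues_def)
    then show False using n by (metis dvd_triv_left even_of_nat)
  qed
qed (auto simp: self_inverse_residues_def intro: Nat.gr0I)

lemma self_inverse_residues_even:
  assumes "0 < m"
  shows "self_inverse_residues (2 * m) = {0, int m}"
proof safe
  fix k assume "k \<in> self_inverse_residues (2 * m)" "k \<noteq> 0"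
  then show "k = int m"
    using neg_mod_eq[of k "int (2 * m)"] by (auto simp: self_inverse_residues_def)
qed (use assms neg_mod_eq[of "int m" "int (2 * m)"] in \<open>auto simp: self_inverse_residues_def\<close>)

lemma centralizer_cyclic_dihedral:
  "centralizer (cyclic_dihedral a n) (to_nat ((0::int), (0::int), True))
     = to_nat ` ({0..<int a} \<times> self_inverse_residues n \<times> (UNIV :: bool set))"
proof -
  have "centralizer (cyclic_dihedral a n) (to_nat ((0::int), (0::int), True))
      = to_nat ` {t \<in> cyclic_dihedral_elems a n. cyclic_dihedral_mult a n (0, 0, True) t = cyclic_dihedral_mult a n t (0, 0, True)}"
    unfolding centralizer_def cyclic_dihedral_simps(1)
    by (auto simp: cyclic_dihedral_simps(2) inj_eq[OF inj_to_nat])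
  also have "{t \<in> cyclic_dihedral_elems a n. cyclic_dihedral_mult a n (0, 0, True) t = cyclic_dihedral_mult a n t (0, 0, True)}
      = {0..<int a} \<times> self_inverse_residues n \<times> UNIV"
    by (auto simp: cyclic_dihedral_elems_def self_inverse_residues_def)
  finally show ?thesis .
qed

lemma arises_from_cyclic_dihedral:
  assumes a: "0 < a" and n: "3 \<le> n"
    and index: "a * n = a * card (self_inverse_residues n) + 2 * q"
  shows "arises_from (cyclic_dihedral a n)
           {to_nat ((0::int), (0::int), False), to_nat ((0::int), (0::int), True)}
           (a * card (self_inverse_residues n)) q"
proof -
  let ?G = "cyclic_dihedral a n" and ?s = "to_nat ((0::int), (0::int), True)"
    and ?rot = "to_nat ((0::int), (1::int), False)"
  interpret group ?G using group_cyclic_dihedral a n by simp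
  have inj: "inj_on to_nat A" for A :: "(int \<times> int \<times> bool) set"
    by (simp add: inj_on_def)
  have s: "?s \<in> carrier ?G" "?s \<noteq> \<one>\<^bsub>?G\<^esub>" "?s \<otimes>\<^bsub>?G\<^esub> ?s = \<one>\<^bsub>?G\<^esub>"
    using a n by (auto simp: cyclic_dihedral_simps cyclic_dihedral_elems_def)
  have H: "{to_nat ((0::int), (0::int), False), ?s} = {\<one>\<^bsub>?G\<^esub>, ?s}"
    by (simp add: cyclic_dihedral_simps)
  have fin: "finite (carrier ?G)"
    by (simp add: cyclic_dihedral_simps cyclic_dihedral_elems_def)
  have "?rot \<in> carrier ?G" "?rot \<otimes>\<^bsub>?G\<^esub> ?s \<noteq> ?s \<otimes>\<^bsub>?G\<^esub> ?rot"
    using a n neg_mod_eq[of 1 "int n"] by (auto simp: cyclic_dihedral_simps cyclic_dihedral_elems_def)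
  then have not_normal: "\<not> {\<one>\<^bsub>?G\<^esub>, ?s} \<lhd> ?G"
    by (rule not_normal_order_two[OF s])
  have "card (fixed_cosets ?G {\<one>\<^bsub>?G\<^esub>, ?s}) * 2 = a * card (self_inverse_residues n) * 2"
    using card_fixed_cosets_order_two[OF s fin]
    by (simp add: centralizer_cyclic_dihedral card_image[OF inj] card_cartesian_product)
  moreover have "card (left_cosets ?G {\<one>\<^bsub>?G\<^esub>, ?s}) * 2 = a * n * 2"
    using card_left_cosets_order_two[OF s fin]
    by (simp add: order_def cyclic_dihedral_simps cyclic_dihedral_elems_def card_image[OF inj] card_cartesian_product)
  ultimately show ?thesis
    using index_eq_fixed_cosets_plus_two_elem_orbits[OF s fin] index a n fin not_normal s
      subgroup_order_two[OF s] group_cyclic_dihedral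
    by (simp add: arises_from_def H)
qed

lemma arises_from_if_dvd:
  assumes r: "0 < r" and q: "0 < q" and dvd: "r dvd 2 * q"
  shows "\<exists>(G :: nat monoid) H. arises_from G H r q"
proof (cases "even r")
  case True
  then obtain a where ra: "r = 2 * a" ..
  with dvd obtain j where j: "q = a * j" by (auto elim!: dvdE)
  have "0 < a" "0 < j" using r q ra j by auto
  moreover have card: "card (self_inverse_residues (2 * (j + 1))) = 2"
    using self_inverse_residues_even[of "j + 1"] by simp
  ultimately have "arises_from (cyclic_dihedral a (2 * (j + 1)))
      {to_nat ((0::int), (0::int), False), to_nat ((0::int), (0::int), True)}
      (a * card (self_inverse_residues (2 * (j + 1)))) q"
    by (intro arises_from_cyclic_dihedral) (simp_all add: card j algebra_simps)
  then show ?thesis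
    unfolding card ra mult.commute[of 2 a] by blast
next
  case False
  then have "r dvd q" using dvd by (simp add: coprime_dvd_mult_right_iff)
  then obtain l where l: "q = r * l" ..
  have "0 < l" using q l by auto
  then have "arises_from (cyclic_dihedral r (2 * l + 1))
      {to_nat ((0::int), (0::int), False), to_nat ((0::int), (0::int), True)}
      (r * card (self_inverse_residues (2 * l + 1))) q"
    using r by (intro arises_from_cyclic_dihedral) (simp_all add: self_inverse_residues_odd l algebra_simps)
  then show ?thesis
    by (auto simp: self_inverse_residues_odd)
qed

lemma arises_from_imp_dvd: "arises_from G H r q \<Longrightarrow> r dvd 2 * q"
  using group.fixed_cosets_dvd_two_elem_orbits by (auto simp: arises_from_def)

theorem proposition7p1:
  fixes r q :: nat
  assumes "0 < r" and "0 < q"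
  shows "((\<exists>(G :: nat monoid) H. arises_from G H r q) \<longleftrightarrow> r dvd 2 * q)
       \<and> (\<forall>(G :: ('a, 'b) monoid_scheme) H. arises_from G H r q \<longrightarrow> r dvd 2 * q)"
  using arises_from_if_dvd[OF assms] by (auto dest: arises_from_imp_dvd)

end
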